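(* Let $K\subseteq\mathbb{R}$ be compact. Then $C^1(K)=C^1(\mathbb{R}|K)$ if and only if $\sigma(\xi)<\infty$ for all $\xi\in K$.
   Context: $C^1(K)$ is the set of $f:K\to\mathbb{R}$ admitting a continuous $f':K\to\mathbb{R}$ with $\lim_{y\to x,\,y\in K\setminus\{x\}}\frac{f(y)-f(x)-f'(x)(y-x)}{|y-x|}=0$ for all $x\in K$; $C^1(\mathbb{R}|K)=\{g|_K: g\in C^1(\mathbb{R})\}$. A gap of $K$ is a bounded connected component of $\mathbb{R}\setminus K$ (a maximal bounded open interval in the complement); $\ell(G)$ denotes its length. For $\xi\in K$ and $\varepsilon>0$, $\sigma_\varepsilon(\xi)=\sup\left\{\frac{\sup\{|y-\xi|:y\in G\}}{\ell(G)}: G\subseteq(\xi-\varepsilon,\xi+\varepsilon) \text{ a gap of } K\right\}\in[0,\infty]$ with $\sup\emptyset=0$, and $\sigma(\xi)=\lim_{\varepsilon\to0}\sigma_\varepsilon(\xi)$. *)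

theory Defs
  imports "HOL-Analysis.Analysis"
begin

definition C1_on :: "real set \<Rightarrow> (real \<Rightarrow> real) set" where
  "C1_on K = {f. \<exists>f'. continuous_on K f' \<and>
      (\<forall>x\<in>K. ((\<lambda>y. (f y - f x - f' x * (y - x)) / \<bar>y - x\<bar>) \<longlongrightarrow> 0) (at x within K))}"

definition C1_real :: "(real \<Rightarrow> real) set" where
  "C1_real = {g. \<exists>g'. (\<forall>x. (g has_real_derivative g' x) (at x)) \<and> continuous_on UNIV g'}"

definition C1_restr :: "real set \<Rightarrow> (real \<Rightarrow> real) set" where
  "C1_restr K = {f. \<exists>g\<in>C1_real. \<forall>x\<in>K. f x = g x}"

definition gap :: "real set \<Rightarrow> real set \<Rightarrow> bool" where
  "gap K G \<longleftrightarrow> G \<in> components (- K) \<and> bounded G"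

definition gap_length :: "real set \<Rightarrow> real" where
  "gap_length G = Sup G - Inf G"

text \<open>sigma_eps K xi eps, with the convention that the supremum of the empty set is 0.\<close>
definition sigma_eps :: "real set \<Rightarrow> real \<Rightarrow> real \<Rightarrow> ereal" where
  "sigma_eps K \<xi> \<epsilon> = Sup (insert 0
     {ereal (Sup ((\<lambda>y. \<bar>y - \<xi>\<bar>) ` G) / gap_length G) | G.
        gap K G \<and> G \<subseteq> {\<xi> - \<epsilon> <..< \<xi> + \<epsilon>}})"

definition sigma :: "real set \<Rightarrow> real \<Rightarrow> ereal" where
  "sigma K \<xi> = Lim (at_right 0) (\<lambda>\<epsilon>. sigma_eps K \<xi> \<epsilon>)"

end

theory Submission
  imports Defs
begin

(*
  If \<sigma>(\<xi>) < \<infinity> everywhere, a function f in C^1(K) with derivative D extends across each gap (a, b)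
  by the cubic with values f a, f b and slopes D a, D b. Near a point \<xi> of K the derivative of this
  cubic is close to D \<xi>: on gaps close to \<xi>, finite \<sigma>(\<xi>) bounds their distance from \<xi> by a
  multiple of their length, which makes the chord slope of f close to D \<xi>; the remaining gaps met
  near \<xi> are long compared to the distance to their nearer endpoint, where the cubic's
  derivative is close to D.

  If \<sigma>(\<xi>) = \<infinity>, choose gaps (a n, b n) accumulating at \<xi>, at separated scales, whose distance
  from \<xi> exceeds 4^n times their length, and add up unit steps across them, the n-th of height
  (distance from \<xi>) / 2^n. The sum is locally constant on K away from \<xi> and o(|y - \<xi>|) at \<xi>, hence in
  C^1(K) with derivative 0; but a C^1 extension g would need |g'| \<ge> 2^n inside the n-th gap by
  the mean value theorem, contradicting continuity of g' at \<xi>.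
*)

lemma bounded_open_connected_eq_Ioo:
  fixes G :: "real set"
  assumes "open G" "connected G" "bounded G" "G \<noteq> {}"
  shows "G = {Inf G<..<Sup G}"
proof
  have bdd: "bdd_below G" "bdd_above G"
    using \<open>bounded G\<close> by (auto simp: bounded_imp_bdd_below bounded_imp_bdd_above)
  show "G \<subseteq> {Inf G<..<Sup G}"
  proof
    fix x assume "x \<in> G"
    then obtain e where "e > 0" "ball x e \<subseteq> G" using \<open>open G\<close> openE by blast
    then have "x - e/2 \<in> G" "x + e/2 \<in> G" by (auto simp: dist_real_def)
    then have "Inf G \<le> x - e/2" "x + e/2 \<le> Sup G" using bdd by (auto intro: cInf_lower cSup_upper)
    then show "x \<in> {Inf G<..<Sup G}" using \<open>e > 0\<close> by simp
  qed
  show "{Inf G<..<Sup G} \<subseteq> G"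
  proof
    fix x assume x: "x \<in> {Inf G<..<Sup G}"
    obtain y where "y \<in> G" "y < x" using x \<open>G \<noteq> {}\<close> bdd(1) by (auto simp: cInf_less_iff)
    moreover obtain z where "z \<in> G" "x < z" using x \<open>G \<noteq> {}\<close> bdd(2) by (auto simp: less_cSup_iff)
    ultimately show "x \<in> G" using \<open>connected G\<close> unfolding connected_iff_interval by (meson less_imp_le)
  qed
qed

lemma gap_eq_Ioo:
  fixes K :: "real set"
  assumes "closed K" "gap K G"
  obtains a b where "a < b" "a \<in> K" "b \<in> K" "G = {a<..<b}"
proof -
  have comp: "G \<in> components (- K)" and "bounded G" using \<open>gap K G\<close> by (auto simp: gap_def)
  have "open G" using comp \<open>closed K\<close> open_components by blast
  have "G \<noteq> {}" "connected G" using comp in_components_nonempty in_components_connected by blast+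
  then have G: "G = {Inf G<..<Sup G}"
    using \<open>open G\<close> \<open>bounded G\<close> bounded_open_connected_eq_Ioo by blast
  then have lt: "Inf G < Sup G" using \<open>G \<noteq> {}\<close> by (metis greaterThanLessThan_empty_iff not_less)
  have "frontier G = {Inf G, Sup G}"
    using lt by (subst G) (auto simp: frontier_def interior_open)
  moreover have "frontier G \<subseteq> K"
    using frontier_of_components_closed_complement[OF \<open>closed K\<close> comp] .
  ultimately show thesis using that lt G by blast
qed

lemma gap_Ioo_iff:
  fixes K :: "real set"
  assumes "closed K"
  shows "gap K {a<..<b} \<longleftrightarrow> a < b \<and> a \<in> K \<and> b \<in> K \<and> {a<..<b} \<inter> K = {}"
proof
  assume gap: "gap K {a<..<b}"
  then obtain a' b' where ab': "a' < b'" "a' \<in> K" "b' \<in> K" "{a<..<b} = {a'<..<b'}"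
    using gap_eq_Ioo[OF assms] by metis
  then have "a = a'" "b = b'" by (metis greaterThanLessThan_eq_iff greaterThanLessThan_empty_iff not_less)+
  moreover have "{a<..<b} \<subseteq> - K" using gap in_components_subset unfolding gap_def by blast
  ultimately show "a < b \<and> a \<in> K \<and> b \<in> K \<and> {a<..<b} \<inter> K = {}" using ab' by blast
next
  assume ab: "a < b \<and> a \<in> K \<and> b \<in> K \<and> {a<..<b} \<inter> K = {}"
  have "{a<..<b} \<in> components (- K)"
    unfolding in_components_maximal
  proof (intro conjI allI impI)
    show "{a<..<b} \<noteq> {}" "{a<..<b} \<subseteq> - K" "connected {a<..<b}" using ab by auto
    fix C :: "real set" assume C: "C \<noteq> {} \<and> {a<..<b} \<subseteq> C \<and> C \<subseteq> - K \<and> connected C"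
    have "(a + b) / 2 \<in> {a<..<b}" using ab by simp
    then have "(a + b) / 2 \<in> C" using C by blast
    have "x \<in> {a<..<b}" if "x \<in> C" for x
    proof (rule ccontr)
      assume "x \<notin> {a<..<b}"
      then have "x \<le> a \<and> a \<le> (a + b) / 2 \<or> (a + b) / 2 \<le> b \<and> b \<le> x" using ab by auto
      then have "a \<in> C \<or> b \<in> C"
        using C \<open>x \<in> C\<close> \<open>(a + b) / 2 \<in> C\<close> unfolding connected_iff_interval by blast
      then show False using C ab by auto
    qed
    then show "C = {a<..<b}" using C by blast
  qed
  then show "gap K {a<..<b}" by (simp add: gap_def)
qed

lemma sigma_eps_mono:
  assumes "e1 \<le> e2" shows "sigma_eps K \<xi> e1 \<le> sigma_eps K \<xi> e2"
  unfolding sigma_eps_def by (rule Sup_subset_mono) (use assms in force)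

lemma sigma_eq_INF: "sigma K \<xi> = (INF e\<in>{0<..}. sigma_eps K \<xi> e)"
proof -
  let ?l = "INF e\<in>{0<..}. sigma_eps K \<xi> e"
  have "(sigma_eps K \<xi> \<longlongrightarrow> ?l) (at_right (0::real))"
  proof (rule decreasing_tendsto)
    show "\<forall>\<^sub>F e in at_right 0. ?l \<le> sigma_eps K \<xi> e"
      by (auto intro!: INF_lower eventually_mono[OF eventually_at_right_less])
  next
    fix x assume "?l < x"
    then obtain e0 where "e0 > 0" "sigma_eps K \<xi> e0 < x" by (auto simp: INF_less_iff)
    then show "\<forall>\<^sub>F e in at_right 0. sigma_eps K \<xi> e < x"
      unfolding eventually_at_right_field
      by (intro exI[of _ e0]) (meson le_less_trans less_imp_le sigma_eps_mono)
  qed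
  then show ?thesis unfolding sigma_def by (intro tendsto_Lim) auto
qed

lemma Sup_abs_diff_Ioo:
  fixes a b \<xi> :: real
  assumes "a < b" "\<xi> \<notin> {a<..<b}"
  shows "Sup ((\<lambda>y. \<bar>y - \<xi>\<bar>) ` {a<..<b}) = max \<bar>a - \<xi>\<bar> \<bar>b - \<xi>\<bar>"
proof (cases "\<xi> \<le> a")
  case True
  have "(\<lambda>y. \<bar>y - \<xi>\<bar>) ` {a<..<b} = {a - \<xi><..<b - \<xi>}"
  proof (intro set_eqI iffI)
    fix z assume "z \<in> {a - \<xi><..<b - \<xi>}"
    then show "z \<in> (\<lambda>y. \<bar>y - \<xi>\<bar>) ` {a<..<b}"
      using True by (intro image_eqI[of _ _ "z + \<xi>"]) auto
  qed (use True in auto)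
  then show ?thesis using True assms by auto
next
  case False
  then have "b \<le> \<xi>" using assms by auto
  have "(\<lambda>y. \<bar>y - \<xi>\<bar>) ` {a<..<b} = {\<xi> - b<..<\<xi> - a}"
  proof (intro set_eqI iffI)
    fix z assume "z \<in> {\<xi> - b<..<\<xi> - a}"
    then show "z \<in> (\<lambda>y. \<bar>y - \<xi>\<bar>) ` {a<..<b}"
      using \<open>b \<le> \<xi>\<close> by (intro image_eqI[of _ _ "\<xi> - z"]) auto
  qed (use \<open>b \<le> \<xi>\<close> in auto)
  then show ?thesis using \<open>b \<le> \<xi>\<close> assms by auto
qed

lemma sigma_eps_le_iff:
  fixes K :: "real set"
  assumes "closed K" "\<xi> \<in> K"
  shows "sigma_eps K \<xi> e \<le> ereal C \<longleftrightarrow> 0 \<le> C \<and>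
    (\<forall>a b. gap K {a<..<b} \<and> \<xi> - e \<le> a \<and> b \<le> \<xi> + e \<longrightarrow> max \<bar>a - \<xi>\<bar> \<bar>b - \<xi>\<bar> \<le> C * (b - a))"
proof -
  have ratio: "ereal (Sup ((\<lambda>y. \<bar>y - \<xi>\<bar>) ` {a<..<b}) / gap_length {a<..<b}) \<le> ereal C
      \<longleftrightarrow> max \<bar>a - \<xi>\<bar> \<bar>b - \<xi>\<bar> \<le> C * (b - a)" if "gap K {a<..<b}" for a b
  proof -
    have "a < b" "\<xi> \<notin> {a<..<b}" using that assms by (auto simp: gap_Ioo_iff)
    then show ?thesis by (simp add: Sup_abs_diff_Ioo gap_length_def pos_divide_le_eq)
  qed
  have "(\<forall>G. gap K G \<and> G \<subseteq> {\<xi> - e<..<\<xi> + e} \<longrightarrow>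
          ereal (Sup ((\<lambda>y. \<bar>y - \<xi>\<bar>) ` G) / gap_length G) \<le> ereal C)
      \<longleftrightarrow> (\<forall>a b. gap K {a<..<b} \<and> \<xi> - e \<le> a \<and> b \<le> \<xi> + e \<longrightarrow> max \<bar>a - \<xi>\<bar> \<bar>b - \<xi>\<bar> \<le> C * (b - a))"
    (is "(\<forall>G. ?P G) \<longleftrightarrow> ?Q")
  proof
    assume "\<forall>G. ?P G"
    show ?Q
    proof (intro allI impI)
      fix a b assume ab: "gap K {a<..<b} \<and> \<xi> - e \<le> a \<and> b \<le> \<xi> + e"
      then have "{a<..<b} \<subseteq> {\<xi> - e<..<\<xi> + e}"
        by (simp add: greaterThanLessThan_subseteq_greaterThanLessThan)
      then show "max \<bar>a - \<xi>\<bar> \<bar>b - \<xi>\<bar> \<le> C * (b - a)" using ab ratio \<open>\<forall>G. ?P G\<close> by blast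
    qed
  next
    assume ?Q
    show "\<forall>G. ?P G"
    proof (intro allI impI)
      fix G assume "gap K G \<and> G \<subseteq> {\<xi> - e<..<\<xi> + e}"
      moreover obtain a b where "a < b" "G = {a<..<b}" using gap_eq_Ioo assms(1) calculation by metis
      ultimately show "ereal (Sup ((\<lambda>y. \<bar>y - \<xi>\<bar>) ` G) / gap_length G) \<le> ereal C"
        using ratio \<open>?Q\<close> by (auto simp: greaterThanLessThan_subseteq_greaterThanLessThan)
    qed
  qed
  then show ?thesis unfolding sigma_eps_def Sup_le_iff by auto
qed

lemma sigma_finite_iff:
  fixes K :: "real set"
  assumes "closed K" "\<xi> \<in> K"
  shows "sigma K \<xi> < \<infinity> \<longleftrightarrow> (\<exists>e>0. \<exists>C\<ge>0.
    \<forall>a b. gap K {a<..<b} \<and> \<xi> - e \<le> a \<and> b \<le> \<xi> + e \<longrightarrow> max \<bar>a - \<xi>\<bar> \<bar>b - \<xi>\<bar> \<le> C * (b - a))"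
proof -
  have finite_iff: "x < \<infinity> \<longleftrightarrow> (\<exists>C. x \<le> ereal C)" for x :: ereal
    by (cases x) auto
  have "sigma K \<xi> < \<infinity> \<longleftrightarrow> (\<exists>e>0. sigma_eps K \<xi> e < \<infinity>)"
    unfolding sigma_eq_INF INF_less_iff by auto
  also have "\<dots> \<longleftrightarrow> (\<exists>e>0. \<exists>C. sigma_eps K \<xi> e \<le> ereal C)"
    by (simp only: finite_iff)
  finally show ?thesis by (simp add: sigma_eps_le_iff[OF assms])
qed

lemma outside_if_far_exceeds_length:
  fixes a b \<xi> M :: real
  assumes "a < b" "1 \<le> M" "M * (b - a) < max \<bar>a - \<xi>\<bar> \<bar>b - \<xi>\<bar>"
  shows "\<xi> < a \<or> b < \<xi>"
proof (rule ccontr)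
  assume "\<not> (\<xi> < a \<or> b < \<xi>)"
  then have "max \<bar>a - \<xi>\<bar> \<bar>b - \<xi>\<bar> \<le> 1 * (b - a)" by auto
  also have "\<dots> \<le> M * (b - a)" using assms(1,2) by (intro mult_right_mono) auto
  finally show False using assms(3) by linarith
qed

lemma sigma_infinite_bad_gap:
  fixes K :: "real set"
  assumes "closed K" "\<xi> \<in> K" "\<not> sigma K \<xi> < \<infinity>" "e > 0" "1 \<le> M"
  obtains a b where "gap K {a<..<b}" "max \<bar>a - \<xi>\<bar> \<bar>b - \<xi>\<bar> \<le> e"
    "M * (b - a) < max \<bar>a - \<xi>\<bar> \<bar>b - \<xi>\<bar>" "0 < min \<bar>a - \<xi>\<bar> \<bar>b - \<xi>\<bar>"
proof -
  have "0 \<le> M" using assms(5) by simp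
  obtain a b where gap: "gap K {a<..<b}" and "\<xi> - e \<le> a" "b \<le> \<xi> + e"
    and ratio: "M * (b - a) < max \<bar>a - \<xi>\<bar> \<bar>b - \<xi>\<bar>"
    using assms(3,4) \<open>0 \<le> M\<close> unfolding sigma_finite_iff[OF assms(1,2)] by (meson not_le)
  have "a < b" using gap assms(1) by (simp add: gap_Ioo_iff)
  then have "max \<bar>a - \<xi>\<bar> \<bar>b - \<xi>\<bar> \<le> e" using \<open>\<xi> - e \<le> a\<close> \<open>b \<le> \<xi> + e\<close> by auto
  moreover have "0 < min \<bar>a - \<xi>\<bar> \<bar>b - \<xi>\<bar>"
    using outside_if_far_exceeds_length[OF \<open>a < b\<close> assms(5) ratio] \<open>a < b\<close> by auto
  ultimately show thesis using that gap ratio by blast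
qed

locale degenerate_gap_sequence =
  fixes K :: "real set" and \<xi> :: real and a b :: "nat \<Rightarrow> real"
  assumes closed: "closed K"
    and gap: "gap K {a n<..<b n}"
    and small: "max \<bar>a n - \<xi>\<bar> \<bar>b n - \<xi>\<bar> \<le> (1/2) ^ n"
    and nested: "max \<bar>a (Suc n) - \<xi>\<bar> \<bar>b (Suc n) - \<xi>\<bar> \<le> min \<bar>a n - \<xi>\<bar> \<bar>b n - \<xi>\<bar>"
    and short: "4 ^ n * (b n - a n) < max \<bar>a n - \<xi>\<bar> \<bar>b n - \<xi>\<bar>"
begin

definition far :: "nat \<Rightarrow> real" where "far n = max \<bar>a n - \<xi>\<bar> \<bar>b n - \<xi>\<bar>"
definition near :: "nat \<Rightarrow> real" where "near n = min \<bar>a n - \<xi>\<bar> \<bar>b n - \<xi>\<bar>"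

lemma gap_endpoints: "a n < b n" "a n \<in> K" "b n \<in> K" "{a n<..<b n} \<inter> K = {}"
  using gap[of n] gap_Ioo_iff[OF closed] by blast+

lemma xi_outside: "\<xi> < a n \<or> b n < \<xi>"
  using outside_if_far_exceeds_length[OF gap_endpoints(1) _ short] by simp

lemma far_near_right: "\<xi> < a n \<Longrightarrow> far n = b n - \<xi> \<and> near n = a n - \<xi>"
  and far_near_left: "b n < \<xi> \<Longrightarrow> far n = \<xi> - a n \<and> near n = \<xi> - b n"
  using gap_endpoints(1)[of n] by (auto simp: far_def near_def)

lemma near_pos: "0 < near n" and near_less_far: "near n < far n"
  using xi_outside[of n] far_near_right[of n] far_near_left[of n] gap_endpoints(1)[of n] by auto

lemma far_le_near: "m < n \<Longrightarrow> far n \<le> near m"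
proof (induction n)
  case (Suc n)
  have "far (Suc n) \<le> near n" using nested[of n] by (simp add: far_def near_def)
  then show ?case using Suc near_less_far[of n] by (cases "m = n") auto
qed simp

lemma far_le_pow:
  assumes "n \<le> m" shows "far m \<le> (1/2) ^ n"
proof -
  have "(1/2::real) ^ m \<le> (1/2) ^ n" using assms by (intro power_decreasing) auto
  then show ?thesis unfolding far_def by (rule order_trans[OF small[of m]])
qed

lemma near_antimono: "m \<le> n \<Longrightarrow> near n \<le> near m"
  using far_le_near[of m n] near_less_far[of n] by (cases "m = n") auto

definition step :: "nat \<Rightarrow> real \<Rightarrow> real" where
  "step n y = (if \<xi> < a n then of_bool (b n \<le> y) else of_bool (y \<le> a n))"

definition height :: "nat \<Rightarrow> real" where "height n = far n / 2 ^ n"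

definition staircase :: "real \<Rightarrow> real" where "staircase y = (\<Sum>n. height n * step n y)"

lemma step_cases: "step n y = 0 \<or> step n y = 1"
  by (simp add: step_def)

lemma step_eq_0_near: "\<bar>y - \<xi>\<bar> \<le> near n \<Longrightarrow> step n y = 0"
  using xi_outside[of n] far_near_right[of n] far_near_left[of n] gap_endpoints(1)[of n]
  by (auto simp: step_def)

lemma step_far: "far n \<le> \<bar>y - \<xi>\<bar> \<Longrightarrow> step n y = of_bool ((\<xi> < a n) = (\<xi> < y))"
  using xi_outside[of n] far_near_right[of n] far_near_left[of n] gap_endpoints(1)[of n]
  by (auto simp: step_def)

lemma step_nonzero_far: "step n y \<noteq> 0 \<Longrightarrow> far n \<le> \<bar>y - \<xi>\<bar>"
  using xi_outside[of n] far_near_right[of n] far_near_left[of n]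
  by (auto simp: step_def split: if_splits)

lemma step_eq_across_K:
  assumes "u \<in> K" "v \<in> K" "\<bar>u - v\<bar> < b n - a n"
  shows "step n u = step n v"
proof -
  have "u \<notin> {a n<..<b n}" "v \<notin> {a n<..<b n}" using gap_endpoints(4)[of n] assms(1,2) by blast+
  then show ?thesis using assms(3) by (auto simp: step_def)
qed

lemma height_nonneg: "0 \<le> height n"
  using near_pos[of n] near_less_far[of n] by (simp add: height_def)

lemma height_step_nonneg: "0 \<le> height n * step n y"
  using height_nonneg step_cases[of n y] by auto

lemma height_step_le: "height n * step n y \<le> \<bar>y - \<xi>\<bar> * (1/2) ^ n"
proof (cases "step n y = 0")
  case False
  then have "far n \<le> \<bar>y - \<xi>\<bar>" "step n y = 1" using step_nonzero_far step_cases by blast+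
  then show ?thesis by (simp add: height_def power_one_over divide_right_mono)
qed (simp add: height_nonneg)

lemma summable_steps: "summable (\<lambda>n. height n * step n y)"
proof (rule summable_comparison_test)
  show "\<exists>N. \<forall>n\<ge>N. norm (height n * step n y) \<le> \<bar>y - \<xi>\<bar> * (1/2) ^ n"
    using height_step_le height_step_nonneg by auto
  show "summable (\<lambda>n. \<bar>y - \<xi>\<bar> * (1/2::real) ^ n)" by (simp add: summable_geometric)
qed

lemma staircase_xi: "staircase \<xi> = 0"
  using step_eq_0_near near_pos by (simp add: staircase_def less_imp_le)

lemma staircase_bound:
  assumes "\<And>m. m < n \<Longrightarrow> step m y = 0"
  shows "\<bar>staircase y\<bar> \<le> 2 * \<bar>y - \<xi>\<bar> * (1/2) ^ n"
proof -
  have "staircase y = (\<Sum>m. height (m + n) * step (m + n) y)"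
    unfolding staircase_def using suminf_split_initial_segment[OF summable_steps, of y n] assms by simp
  also have "\<dots> \<le> (\<Sum>m. \<bar>y - \<xi>\<bar> * (1/2) ^ n * (1/2) ^ m)"
  proof (rule suminf_le)
    show "height (m + n) * step (m + n) y \<le> \<bar>y - \<xi>\<bar> * (1/2) ^ n * (1/2) ^ m" for m
      using height_step_le[of "m + n" y] by (simp add: power_add mult_ac)
    show "summable (\<lambda>m. height (m + n) * step (m + n) y)"
      using summable_steps by (rule summable_ignore_initial_segment)
    show "summable (\<lambda>m. \<bar>y - \<xi>\<bar> * (1/2) ^ n * (1/2::real) ^ m)"
      by (intro summable_mult summable_geometric) simp
  qed
  also have "\<dots> = 2 * \<bar>y - \<xi>\<bar> * (1/2) ^ n"
    by (subst suminf_mult) (auto simp: suminf_geometric summable_geometric)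
  finally have "staircase y \<le> 2 * \<bar>y - \<xi>\<bar> * (1/2) ^ n" .
  moreover have "0 \<le> staircase y" unfolding staircase_def by (intro suminf_nonneg summable_steps height_step_nonneg)
  ultimately show ?thesis by simp
qed

lemma staircase_remainder_at_xi: "((\<lambda>y. (staircase y - staircase \<xi> - 0 * (y - \<xi>)) / \<bar>y - \<xi>\<bar>) \<longlongrightarrow> 0) (at \<xi> within K)"
  unfolding Lim_within
proof (intro allI impI)
  fix e :: real assume "e > 0"
  obtain n where "2 / e < 2 ^ n" using real_arch_pow[of 2 "2 / e"] by auto
  then have small_n: "2 * (1/2) ^ n < e" using \<open>e > 0\<close> by (simp add: power_one_over field_simps)
  show "\<exists>d>0. \<forall>y\<in>K. 0 < dist y \<xi> \<and> dist y \<xi> < d \<longrightarrow>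
      dist ((staircase y - staircase \<xi> - 0 * (y - \<xi>)) / \<bar>y - \<xi>\<bar>) 0 < e"
  proof (intro exI[of _ "near n"] conjI ballI impI near_pos)
    fix y assume "y \<in> K" "0 < dist y \<xi> \<and> dist y \<xi> < near n"
    then have y: "0 < \<bar>y - \<xi>\<bar>" "\<bar>y - \<xi>\<bar> < near n" by (auto simp: dist_real_def)
    have "step m y = 0" if "m < n" for m
      using step_eq_0_near y(2) near_antimono[of m n] that by simp
    then have "\<bar>staircase y\<bar> / \<bar>y - \<xi>\<bar> \<le> 2 * (1/2) ^ n"
      using staircase_bound y(1) by (simp add: divide_le_eq mult_ac)
    then show "dist ((staircase y - staircase \<xi> - 0 * (y - \<xi>)) / \<bar>y - \<xi>\<bar>) 0 < e"
      using small_n by (simp add: staircase_xi dist_real_def)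
  qed
qed

text \<open>Away from \<xi>, only finitely many steps can jump near x, and these jump inside gaps of K.\<close>
lemma staircase_locally_constant:
  assumes "x \<in> K" "x \<noteq> \<xi>"
  shows "\<forall>\<^sub>F y in at x within K. staircase y = staircase x"
proof -
  define r where "r = \<bar>x - \<xi>\<bar>"
  have "r > 0" using assms(2) by (simp add: r_def)
  obtain n where "2 / r < 2 ^ n" using real_arch_pow[of 2 "2 / r"] by auto
  then have "(1/2) ^ n < r / 2" using \<open>r > 0\<close> by (simp add: power_one_over field_simps)
  then have far_small: "far m < r / 2" if "n \<le> m" for m
    using far_le_pow[OF that] by linarith
  have near_x: "\<forall>\<^sub>F y in at x within K. \<bar>y - x\<bar> < r / 2"
    using \<open>r > 0\<close> by (auto simp: eventually_at dist_real_def intro!: exI[of _ "r / 2"])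
  have "\<forall>\<^sub>F y in at x within K. step m y = step m x" for m
    using gap_endpoints(1)[of m] assms(1)
    by (auto simp: eventually_at dist_real_def intro!: exI[of _ "b m - a m"] step_eq_across_K)
  then have first_steps: "\<forall>\<^sub>F y in at x within K. \<forall>m\<in>{..<n}. step m y = step m x"
    by (simp add: eventually_ball_finite)
  show ?thesis
    using near_x first_steps
  proof eventually_elim
    case (elim y)
    have "step m y = step m x" for m
    proof (cases "m < n")
      case False
      then have "far m \<le> \<bar>y - \<xi>\<bar>" "far m \<le> \<bar>x - \<xi>\<bar>" "(\<xi> < y) = (\<xi> < x)"
        using far_small[of m] elim(1) r_def by (auto simp: abs_if split: if_splits)
      then show ?thesis by (simp add: step_far)
    qed (use elim(2) in auto)
    then show "staircase y = staircase x" by (simp add: staircase_def)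
  qed
qed

lemma staircase_C1_on: "staircase \<in> C1_on K"
  unfolding C1_on_def
proof (intro CollectI exI[of _ "\<lambda>_. 0"] conjI ballI)
  fix x assume "x \<in> K"
  show "((\<lambda>y. (staircase y - staircase x - 0 * (y - x)) / \<bar>y - x\<bar>) \<longlongrightarrow> 0) (at x within K)"
  proof (cases "x = \<xi>")
    case False
    show ?thesis
      by (rule tendsto_eventually, rule eventually_mono[OF staircase_locally_constant[OF \<open>x \<in> K\<close> False]]) simp
  qed (use staircase_remainder_at_xi in simp)
qed simp

lemma staircase_jump: "\<bar>staircase (b n) - staircase (a n)\<bar> = height n"
proof -
  have other: "step m (b n) = step m (a n)" if "m \<noteq> n" for m
  proof (cases "m < n")
    case True
    then have "\<bar>a n - \<xi>\<bar> \<le> near m" "\<bar>b n - \<xi>\<bar> \<le> near m"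
      using far_le_near[of m n] by (auto simp: far_def)
    then show ?thesis by (simp add: step_eq_0_near)
  next
    case False
    then have "far m \<le> near n" using far_le_near[of n m] that by simp
    then have "far m \<le> \<bar>a n - \<xi>\<bar>" "far m \<le> \<bar>b n - \<xi>\<bar>" "(\<xi> < a n) = (\<xi> < b n)"
      using xi_outside[of n] gap_endpoints(1)[of n] by (auto simp: near_def)
    then show ?thesis by (simp add: step_far)
  qed
  have "staircase (b n) - staircase (a n) = (\<Sum>m. height m * step m (b n) - height m * step m (a n))"
    unfolding staircase_def by (rule suminf_diff[OF summable_steps summable_steps])
  also have "\<dots> = (\<Sum>m. if m = n then height n * (step n (b n) - step n (a n)) else 0)"
    using other by (intro suminf_cong) (auto simp: right_diff_distrib)
  also have "\<dots> = height n * (step n (b n) - step n (a n))"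
    using sums_single[of n "\<lambda>_. height n * (step n (b n) - step n (a n))"] by (simp add: sums_iff)
  finally show ?thesis
    using xi_outside[of n] gap_endpoints(1)[of n] height_nonneg[of n] by (auto simp: step_def)
qed

text \<open>A C^1 extension g would satisfy height n \<le> (b n - a n) \<cdot> |g'| near \<xi> by the mean value
  theorem, whereas height n = far n / 2^n exceeds 2^n (b n - a n).\<close>
lemma staircase_not_C1_restr: "staircase \<notin> C1_restr K"
proof
  assume "staircase \<in> C1_restr K"
  then obtain g g' where g: "\<And>x. (g has_real_derivative g' x) (at x)" "continuous_on UNIV g'"
    "\<And>x. x \<in> K \<Longrightarrow> staircase x = g x"
    unfolding C1_restr_def C1_real_def by blast
  have "isCont g' \<xi>" using g(2) by (simp add: continuous_on_eq_continuous_at)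
  then obtain d where "d > 0" and d: "\<And>t. \<bar>t - \<xi>\<bar> < d \<Longrightarrow> \<bar>g' t - g' \<xi>\<bar> < 1"
    unfolding continuous_at_eps_delta dist_real_def by (meson zero_less_one)
  define B where "B = \<bar>g' \<xi>\<bar> + 1"
  obtain n1 where n1: "1 / d < 2 ^ n1" using real_arch_pow[of 2 "1 / d"] by auto
  obtain n2 where n2: "B < 2 ^ n2" using real_arch_pow[of 2 B] by auto
  define n where "n = max n1 n2"
  have "far n \<le> (1/2) ^ n1" using far_le_pow by (simp add: n_def)
  also have "(1/2) ^ n1 < d" using n1 \<open>d > 0\<close> by (simp add: power_one_over field_simps)
  finally have far_d: "far n < d" .
  have "(2::real) ^ n2 \<le> 2 ^ n" by (intro power_increasing) (auto simp: n_def)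
  then have "B < 2 ^ n" using n2 by linarith
  obtain z where z: "a n < z" "z < b n" "g (b n) - g (a n) = (b n - a n) * g' z"
    using MVT2[OF gap_endpoints(1)[of n], of g g'] g(1) by blast
  have "\<bar>z - \<xi>\<bar> \<le> far n" using z by (auto simp: far_def)
  then have "\<bar>g' z - g' \<xi>\<bar> < 1" using d far_d by simp
  then have "\<bar>g' z\<bar> < B" unfolding B_def by arith
  have "far n / 2 ^ n = \<bar>staircase (b n) - staircase (a n)\<bar>" using staircase_jump by (simp add: height_def)
  also have "\<dots> = (b n - a n) * \<bar>g' z\<bar>"
    using z(3) g(3) gap_endpoints(1-3)[of n] by (simp add: abs_mult)
  finally have "far n = 2 ^ n * (b n - a n) * \<bar>g' z\<bar>" by (simp add: field_simps)
  also have "\<dots> < 2 ^ n * (b n - a n) * 2 ^ n"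
    using \<open>\<bar>g' z\<bar> < B\<close> \<open>B < 2 ^ n\<close> gap_endpoints(1)[of n] by simp
  also have "\<dots> = 4 ^ n * (b n - a n)" by (simp add: power_mult_distrib[symmetric])
  finally show False using short[of n] unfolding far_def by linarith
qed

end

lemma degenerate_gap_sequence_exists:
  fixes K :: "real set"
  assumes "closed K" "\<xi> \<in> K" "\<not> sigma K \<xi> < \<infinity>"
  shows "\<exists>a b. degenerate_gap_sequence K \<xi> a b"
proof -
  define P where "P n p \<longleftrightarrow> gap K {fst p<..<snd p} \<and> max \<bar>fst p - \<xi>\<bar> \<bar>snd p - \<xi>\<bar> \<le> (1/2) ^ n
    \<and> 4 ^ n * (snd p - fst p) < max \<bar>fst p - \<xi>\<bar> \<bar>snd p - \<xi>\<bar> \<and> 0 < min \<bar>fst p - \<xi>\<bar> \<bar>snd p - \<xi>\<bar>"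
    for n :: nat and p :: "real \<times> real"
  define Q where "Q p q \<longleftrightarrow> max \<bar>fst q - \<xi>\<bar> \<bar>snd q - \<xi>\<bar> \<le> min (\<bar>fst p - \<xi>\<bar>) (\<bar>snd p - \<xi>\<bar>)"
    for p q :: "real \<times> real"
  obtain a b where "gap K {a<..<b}" "max \<bar>a - \<xi>\<bar> \<bar>b - \<xi>\<bar> \<le> 1"
    "1 * (b - a) < max \<bar>a - \<xi>\<bar> \<bar>b - \<xi>\<bar>" "0 < min \<bar>a - \<xi>\<bar> \<bar>b - \<xi>\<bar>"
    using sigma_infinite_bad_gap[OF assms zero_less_one order.refl] by blast
  then have "\<exists>p. P 0 p" by (intro exI[of _ "(a, b)"]) (simp add: P_def)
  moreover have "\<exists>q. P (Suc n) q \<and> Q p q" if "P n p" for n p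
  proof -
    have "0 < min \<bar>fst p - \<xi>\<bar> \<bar>snd p - \<xi>\<bar>" using that by (simp add: P_def)
    define e where "e = min (min \<bar>fst p - \<xi>\<bar> \<bar>snd p - \<xi>\<bar>) ((1/2) ^ Suc n)"
    have "e > 0" using \<open>0 < min \<bar>fst p - \<xi>\<bar> \<bar>snd p - \<xi>\<bar>\<close> by (simp add: e_def)
    moreover have "(1::real) \<le> 4 ^ Suc n" by (rule one_le_power) simp
    ultimately obtain a b where "gap K {a<..<b}" and ab: "max \<bar>a - \<xi>\<bar> \<bar>b - \<xi>\<bar> \<le> e"
      and "4 ^ Suc n * (b - a) < max \<bar>a - \<xi>\<bar> \<bar>b - \<xi>\<bar>" "0 < min \<bar>a - \<xi>\<bar> \<bar>b - \<xi>\<bar>"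
      using sigma_infinite_bad_gap[OF assms] by blast
    moreover have "max \<bar>a - \<xi>\<bar> \<bar>b - \<xi>\<bar> \<le> (1/2) ^ Suc n"
      and "max \<bar>a - \<xi>\<bar> \<bar>b - \<xi>\<bar> \<le> min \<bar>fst p - \<xi>\<bar> \<bar>snd p - \<xi>\<bar>"
      using ab unfolding e_def by (meson min.boundedE)+
    ultimately show ?thesis by (intro exI[of _ "(a, b)"]) (simp add: P_def Q_def)
  qed
  ultimately obtain p where p: "\<And>n. P n (p n) \<and> Q (p n) (p (Suc n))"
    using dependent_nat_choice[of P "\<lambda>_. Q"] by blast
  have "degenerate_gap_sequence K \<xi> (fst \<circ> p) (snd \<circ> p)"
    by unfold_locales (use p assms(1) in \<open>simp_all add: P_def Q_def\<close>)
  then show ?thesis by blast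
qed

lemma C1_on_ne_C1_restr_if_sigma_infinite:
  fixes K :: "real set"
  assumes "closed K" "\<xi> \<in> K" "\<not> sigma K \<xi> < \<infinity>"
  shows "C1_on K \<noteq> C1_restr K"
proof -
  obtain a b where "degenerate_gap_sequence K \<xi> a b"
    using degenerate_gap_sequence_exists[OF assms] by blast
  then interpret degenerate_gap_sequence K \<xi> a b .
  show ?thesis using staircase_C1_on staircase_not_C1_restr by blast
qed

definition hermite_excess :: "(real \<Rightarrow> real) \<Rightarrow> (real \<Rightarrow> real) \<Rightarrow> real \<Rightarrow> real \<Rightarrow> real" where
  "hermite_excess f D a b = (f b - f a) / (b - a) - (D a + D b) / 2"

definition hermite_blend :: "real \<Rightarrow> real \<Rightarrow> real \<Rightarrow> real \<Rightarrow> real" where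
  "hermite_blend p q k u = p * (1 - u) + q * u + 6 * k * u * (1 - u)"

text \<open>The cubic on [a, b] with values f a, f b and slopes D a, D b at the endpoints.\<close>
definition hermite :: "(real \<Rightarrow> real) \<Rightarrow> (real \<Rightarrow> real) \<Rightarrow> real \<Rightarrow> real \<Rightarrow> real \<Rightarrow> real" where
  "hermite f D a b t = (let u = (t - a) / (b - a) in
     f a + (b - a) * (D a * (u - u\<^sup>2 / 2) + D b * (u\<^sup>2 / 2) + hermite_excess f D a b * (3 * u\<^sup>2 - 2 * u ^ 3)))"

definition hermite_deriv :: "(real \<Rightarrow> real) \<Rightarrow> (real \<Rightarrow> real) \<Rightarrow> real \<Rightarrow> real \<Rightarrow> real \<Rightarrow> real" where
  "hermite_deriv f D a b t = hermite_blend (D a) (D b) (hermite_excess f D a b) ((t - a) / (b - a))"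

lemma has_real_derivative_hermite:
  assumes "a \<noteq> b"
  shows "(hermite f D a b has_real_derivative hermite_deriv f D a b t) (at t)"
proof -
  have "b - a \<noteq> 0" using assms by simp
  define k where "k = hermite_excess f D a b"
  define P where "P u = D a * (u - u\<^sup>2 / 2) + D b * (u\<^sup>2 / 2) + k * (3 * u\<^sup>2 - 2 * u ^ 3)" for u :: real
  have P': "(P has_real_derivative hermite_blend (D a) (D b) k u) (at u)" for u
    unfolding P_def hermite_blend_def
    by (auto intro!: derivative_eq_intros simp: power2_eq_square) (simp add: algebra_simps)
  have "((\<lambda>t. (t - a) / (b - a)) has_real_derivative 1 / (b - a)) (at t)"
    using \<open>b - a \<noteq> 0\<close> by (auto intro!: derivative_eq_intros)
  from DERIV_chain2[OF P' this] \<open>b - a \<noteq> 0\<close>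
  have "((\<lambda>t. f a + (b - a) * P ((t - a) / (b - a))) has_real_derivative
      (b - a) * (hermite_blend (D a) (D b) k ((t - a) / (b - a)) * (1 / (b - a)))) (at t)"
    by (auto intro!: derivative_eq_intros)
  moreover have "hermite f D a b = (\<lambda>t. f a + (b - a) * P ((t - a) / (b - a)))"
    by (simp add: fun_eq_iff hermite_def P_def k_def Let_def)
  ultimately show ?thesis using assms by (simp add: hermite_deriv_def k_def)
qed

lemma hermite_left: "hermite f D a b a = f a"
  by (simp add: hermite_def)

lemma hermite_right:
  assumes "a \<noteq> b" shows "hermite f D a b b = f b"
proof -
  have "b - a \<noteq> 0" using assms by simp
  then show ?thesis by (simp add: hermite_def hermite_excess_def field_simps)
qed

lemma hermite_deriv_left: "hermite_deriv f D a b a = D a"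
  by (simp add: hermite_deriv_def hermite_blend_def)

lemma hermite_deriv_right: "a \<noteq> b \<Longrightarrow> hermite_deriv f D a b b = D b"
  by (simp add: hermite_deriv_def hermite_blend_def)

lemma isCont_hermite_deriv: "a \<noteq> b \<Longrightarrow> isCont (hermite_deriv f D a b) t"
  unfolding hermite_deriv_def hermite_blend_def by (intro continuous_intros) auto

lemma hermite_blend_swap: "hermite_blend p q k u = hermite_blend q p k (1 - u)"
  by (simp add: hermite_blend_def algebra_simps)

lemma hermite_blend_close:
  assumes "0 \<le> u" "u \<le> 1" "\<bar>p - X\<bar> \<le> e" "\<bar>q - X\<bar> \<le> e" "\<bar>s - X\<bar> \<le> 2 * e"
  shows "\<bar>hermite_blend p q (s - (p + q) / 2) u - X\<bar> \<le> 6 * e"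
proof -
  define w where "w = 6 * u * (1 - u)"
  define k where "k = (s - X) - ((p - X) + (q - X)) / 2"
  have "0 \<le> w" unfolding w_def using assms(1,2) by simp
  have "w = 3/2 - 3/2 * (2 * u - 1)\<^sup>2" unfolding w_def by (simp add: power2_eq_square algebra_simps)
  then have "w \<le> 3/2" by simp
  have "\<bar>k\<bar> \<le> 3 * e" unfolding k_def using assms(3-5) by (auto simp: abs_le_iff field_simps)
  have "hermite_blend p q (s - (p + q) / 2) u - X = (p - X) * (1 - u) + (q - X) * u + w * k"
    unfolding hermite_blend_def w_def k_def by (simp add: field_simps)
  also have "\<bar>\<dots>\<bar> \<le> e * (1 - u) + e * u + 3/2 * (3 * e)"
  proof (rule order_trans[OF abs_triangle_ineq] add_mono)+
    show "\<bar>(p - X) * (1 - u)\<bar> \<le> e * (1 - u)" using assms by (simp add: abs_mult mult_right_mono)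
    show "\<bar>(q - X) * u\<bar> \<le> e * u" using assms by (simp add: abs_mult mult_right_mono)
    have "\<bar>w * k\<bar> = w * \<bar>k\<bar>" using \<open>0 \<le> w\<close> by (simp add: abs_mult)
    also have "\<dots> \<le> 3/2 * (3 * e)"
      using \<open>0 \<le> w\<close> \<open>w \<le> 3/2\<close> \<open>\<bar>k\<bar> \<le> 3 * e\<close> by (intro mult_mono) auto
    finally show "\<bar>w * k\<bar> \<le> 3/2 * (3 * e)" .
  qed
  also have "\<dots> = 11/2 * e" by (simp add: algebra_simps)
  finally show ?thesis using assms(3) by linarith
qed

lemma hermite_blend_near_left:
  assumes "0 \<le> u" "u \<le> 1" "\<bar>p - X\<bar> \<le> e" "\<bar>q - X\<bar> \<le> Q" "\<bar>k\<bar> \<le> \<kappa>"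
  shows "\<bar>hermite_blend p q k u - X\<bar> \<le> e + u * (Q + 6 * \<kappa>)"
proof -
  have "hermite_blend p q k u - X = (p - X) * (1 - u) + ((q - X) + 6 * k * (1 - u)) * u"
    by (simp add: hermite_blend_def algebra_simps)
  also have "\<bar>\<dots>\<bar> \<le> e * 1 + (Q + 6 * \<kappa>) * u"
  proof (rule order_trans[OF abs_triangle_ineq] add_mono)+
    show "\<bar>(p - X) * (1 - u)\<bar> \<le> e * 1"
      unfolding abs_mult using assms by (intro mult_mono) auto
    have "\<bar>k\<bar> * \<bar>1 - u\<bar> \<le> \<kappa> * 1" using assms by (intro mult_mono) auto
    then have "\<bar>6 * k * (1 - u)\<bar> \<le> 6 * \<kappa>" by (simp add: abs_mult)
    then have "\<bar>(q - X) + 6 * k * (1 - u)\<bar> \<le> Q + 6 * \<kappa>" using assms(4) by linarith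
    then show "\<bar>((q - X) + 6 * k * (1 - u)) * u\<bar> \<le> (Q + 6 * \<kappa>) * u"
      using assms(1) by (simp add: abs_mult mult_right_mono)
  qed
  finally show ?thesis by (simp add: algebra_simps)
qed

lemma hermite_deriv_close:
  assumes "a < b" "a \<le> c" "c \<le> b" "\<bar>D a - X\<bar> \<le> e" "\<bar>D b - X\<bar> \<le> e" "\<bar>(f b - f a) / (b - a) - X\<bar> \<le> 2 * e"
  shows "\<bar>hermite_deriv f D a b c - X\<bar> \<le> 6 * e"
  unfolding hermite_deriv_def hermite_excess_def using assms by (intro hermite_blend_close) auto

lemma hermite_deriv_near_left_end:
  assumes "a < b" "a \<le> c" "c \<le> b" "\<bar>D a - X\<bar> \<le> e" "\<bar>D b - X\<bar> \<le> Q" "\<bar>hermite_excess f D a b\<bar> \<le> \<kappa>"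
  shows "\<bar>hermite_deriv f D a b c - X\<bar> \<le> e + (c - a) / (b - a) * (Q + 6 * \<kappa>)"
  unfolding hermite_deriv_def using assms by (intro hermite_blend_near_left) auto

lemma hermite_deriv_near_right_end:
  assumes "a < b" "a \<le> c" "c \<le> b" "\<bar>D b - X\<bar> \<le> e" "\<bar>D a - X\<bar> \<le> Q" "\<bar>hermite_excess f D a b\<bar> \<le> \<kappa>"
  shows "\<bar>hermite_deriv f D a b c - X\<bar> \<le> e + (b - c) / (b - a) * (Q + 6 * \<kappa>)"
proof -
  have swap: "1 - (c - a) / (b - a) = (b - c) / (b - a)" using assms(1) by (simp add: field_simps)
  have "\<bar>hermite_blend (D b) (D a) (hermite_excess f D a b) ((b - c) / (b - a)) - X\<bar>
      \<le> e + (b - c) / (b - a) * (Q + 6 * \<kappa>)"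
    using assms by (intro hermite_blend_near_left) auto
  then show ?thesis unfolding hermite_deriv_def hermite_blend_swap[of "D a"] swap .
qed

lemma hermite_excess_bound:
  assumes "a < b" "\<bar>f a\<bar> \<le> B" "\<bar>f b\<bar> \<le> B" "\<bar>D a\<bar> \<le> B" "\<bar>D b\<bar> \<le> B"
  shows "\<bar>hermite_excess f D a b\<bar> \<le> 2 * B / (b - a) + B"
proof -
  have "\<bar>(f b - f a) / (b - a)\<bar> \<le> 2 * B / (b - a)"
    using assms by (simp add: divide_right_mono)
  moreover have "\<bar>(D a + D b) / 2\<bar> \<le> B" using assms(4,5) by simp
  ultimately show ?thesis unfolding hermite_excess_def by linarith
qed

lemma remainder_le_eventually:
  fixes f :: "real \<Rightarrow> real"
  assumes "((\<lambda>y. (f y - f x - d * (y - x)) / \<bar>y - x\<bar>) \<longlongrightarrow> 0) (at x within K)" "e > 0"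
  shows "\<exists>\<delta>>0. \<forall>y\<in>K. \<bar>y - x\<bar> < \<delta> \<longrightarrow> \<bar>f y - f x - d * (y - x)\<bar> \<le> e * \<bar>y - x\<bar>"
proof -
  obtain \<delta> where "\<delta> > 0" and \<delta>: "\<And>y. y \<in> K \<Longrightarrow> 0 < dist y x \<Longrightarrow> dist y x < \<delta> \<Longrightarrow>
      dist ((f y - f x - d * (y - x)) / \<bar>y - x\<bar>) 0 < e"
    using assms unfolding Lim_within by meson
  have "\<bar>f y - f x - d * (y - x)\<bar> \<le> e * \<bar>y - x\<bar>" if "y \<in> K" "\<bar>y - x\<bar> < \<delta>" for y
  proof (cases "y = x")
    case False
    then have "\<bar>f y - f x - d * (y - x)\<bar> / \<bar>y - x\<bar> < e"
      using \<delta> that by (auto simp: dist_real_def)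
    then show ?thesis using False by (simp add: divide_less_eq less_imp_le)
  qed simp
  then show ?thesis using \<open>\<delta> > 0\<close> by blast
qed

lemma continuous_within_if_remainder_tendsto:
  fixes f :: "real \<Rightarrow> real"
  assumes "((\<lambda>y. (f y - f x - d * (y - x)) / \<bar>y - x\<bar>) \<longlongrightarrow> 0) (at x within K)"
  shows "(f \<longlongrightarrow> f x) (at x within K)"
proof (rule Lim_transform_within[OF _ zero_less_one])
  have "((\<lambda>y. f x + d * (y - x) + \<bar>y - x\<bar> * ((f y - f x - d * (y - x)) / \<bar>y - x\<bar>)) \<longlongrightarrow>
      f x + d * (x - x) + \<bar>x - x\<bar> * 0) (at x within K)"
    by (intro tendsto_intros assms)
  then show "((\<lambda>y. f x + d * (y - x) + \<bar>y - x\<bar> * ((f y - f x - d * (y - x)) / \<bar>y - x\<bar>))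
      \<longlongrightarrow> f x) (at x within K)" by simp
qed (simp add: dist_real_def)

lemma has_real_derivative_from_set_and_mean_values:
  fixes g G :: "real \<Rightarrow> real" and K :: "real set"
  assumes "isCont G \<xi>"
    and on_set: "\<And>e. e > 0 \<Longrightarrow> \<exists>\<delta>>0. \<forall>y\<in>K. \<bar>y - \<xi>\<bar> < \<delta> \<longrightarrow> \<bar>g y - g \<xi> - G \<xi> * (y - \<xi>)\<bar> \<le> e * \<bar>y - \<xi>\<bar>"
    and off_set: "\<And>t. t \<notin> K \<Longrightarrow> \<exists>a c. a \<in> K \<and> \<bar>t - a\<bar> + \<bar>a - \<xi>\<bar> = \<bar>t - \<xi>\<bar> \<and> \<bar>c - \<xi>\<bar> \<le> \<bar>t - \<xi>\<bar>
        \<and> g t - g a = G c * (t - a)"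
  shows "(g has_real_derivative G \<xi>) (at \<xi>)"
  unfolding has_field_derivative_iff LIM_eq
proof (intro allI impI)
  fix r :: real assume "r > 0"
  define e where "e = r / 2"
  have "e > 0" "e < r" using \<open>r > 0\<close> by (auto simp: e_def)
  obtain d1 where "d1 > 0" and d1: "\<forall>y\<in>K. \<bar>y - \<xi>\<bar> < d1 \<longrightarrow> \<bar>g y - g \<xi> - G \<xi> * (y - \<xi>)\<bar> \<le> e * \<bar>y - \<xi>\<bar>"
    using on_set[OF \<open>e > 0\<close>] by blast
  obtain d2 where "d2 > 0" and d2: "\<forall>c. dist c \<xi> < d2 \<longrightarrow> dist (G c) (G \<xi>) < e"
    using \<open>isCont G \<xi>\<close> \<open>e > 0\<close> unfolding continuous_at_eps_delta by blast
  have remainder: "\<bar>g y - g \<xi> - G \<xi> * (y - \<xi>)\<bar> \<le> e * \<bar>y - \<xi>\<bar>" if y: "\<bar>y - \<xi>\<bar> < min d1 d2" for y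
  proof (cases "y \<in> K")
    case False
    then obtain a c where "a \<in> K" and a: "\<bar>y - a\<bar> + \<bar>a - \<xi>\<bar> = \<bar>y - \<xi>\<bar>" and "\<bar>c - \<xi>\<bar> \<le> \<bar>y - \<xi>\<bar>"
      and mv: "g y - g a = G c * (y - a)" using off_set by blast
    have "\<bar>g a - g \<xi> - G \<xi> * (a - \<xi>)\<bar> \<le> e * \<bar>a - \<xi>\<bar>" using d1 \<open>a \<in> K\<close> a y by auto
    moreover have "\<bar>G c - G \<xi>\<bar> < e" using d2 \<open>\<bar>c - \<xi>\<bar> \<le> \<bar>y - \<xi>\<bar>\<close> y by (simp add: dist_real_def)
    then have "\<bar>(G c - G \<xi>) * (y - a)\<bar> \<le> e * \<bar>y - a\<bar>" unfolding abs_mult by (simp add: mult_right_mono)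
    moreover have "g y - g \<xi> - G \<xi> * (y - \<xi>) = (G c - G \<xi>) * (y - a) + (g a - g \<xi> - G \<xi> * (a - \<xi>))"
      using mv by (simp add: algebra_simps)
    ultimately have "\<bar>g y - g \<xi> - G \<xi> * (y - \<xi>)\<bar> \<le> e * \<bar>y - a\<bar> + e * \<bar>a - \<xi>\<bar>" by linarith
    also have "\<dots> = e * \<bar>y - \<xi>\<bar>" using a by (simp flip: distrib_left)
    finally show ?thesis .
  qed (use d1 y in auto)
  show "\<exists>s>0. \<forall>y. y \<noteq> \<xi> \<and> norm (y - \<xi>) < s \<longrightarrow> norm ((g y - g \<xi>) / (y - \<xi>) - G \<xi>) < r"
  proof (intro exI[of _ "min d1 d2"] conjI allI impI)
    fix y assume y: "y \<noteq> \<xi> \<and> norm (y - \<xi>) < min d1 d2"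
    have "norm ((g y - g \<xi>) / (y - \<xi>) - G \<xi>) = \<bar>g y - g \<xi> - G \<xi> * (y - \<xi>)\<bar> / \<bar>y - \<xi>\<bar>"
      using y by (simp add: field_simps abs_divide)
    also have "\<dots> \<le> e" using remainder y by (simp add: divide_le_eq)
    finally show "norm ((g y - g \<xi>) / (y - \<xi>) - G \<xi>) < r" using \<open>e < r\<close> by linarith
  qed (use \<open>d1 > 0\<close> \<open>d2 > 0\<close> in simp)
qed

lemma mean_value_between:
  fixes \<phi> \<phi>' :: "real \<Rightarrow> real"
  assumes "\<And>x. (\<phi> has_real_derivative \<phi>' x) (at x)"
  shows "\<exists>c. min a t \<le> c \<and> c \<le> max a t \<and> \<phi> t - \<phi> a = \<phi>' c * (t - a)"
proof -
  consider "a < t" | "t < a" | "a = t" by linarith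
  then show ?thesis
  proof cases
    case 1
    then obtain c where "a < c" "c < t" "\<phi> t - \<phi> a = (t - a) * \<phi>' c" using MVT2[OF 1, of \<phi> \<phi>'] assms by blast
    then show ?thesis by (intro exI[of _ c]) (auto simp: algebra_simps)
  next
    case 2
    then obtain c where "t < c" "c < a" "\<phi> a - \<phi> t = (a - t) * \<phi>' c" using MVT2[OF 2, of \<phi> \<phi>'] assms by blast
    then show ?thesis by (intro exI[of _ c]) (auto simp: algebra_simps)
  qed auto
qed

lemma far_gap_length_ge:
  fixes a b c \<xi> \<delta> \<eta> :: real
  assumes "\<xi> \<le> a \<or> b \<le> \<xi>" "a \<le> c" "c \<le> b" "\<bar>c - \<xi>\<bar> < \<delta>" "\<delta> \<le> \<eta> / 2"
    and "\<eta> \<le> max \<bar>a - \<xi>\<bar> \<bar>b - \<xi>\<bar>"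
  shows "\<eta> / 2 \<le> b - a"
  using assms(1)
proof
  assume "\<xi> \<le> a"
  then have "\<eta> \<le> b - \<xi>" using assms(2,3,6) by (auto simp: max_def split: if_splits)
  then show ?thesis using \<open>\<xi> \<le> a\<close> assms(2,4,5) by linarith
next
  assume "b \<le> \<xi>"
  then have "\<eta> \<le> \<xi> - a" using assms(2,3,6) by (auto simp: max_def split: if_splits)
  then show ?thesis using \<open>b \<le> \<xi>\<close> assms(3,4,5) by linarith
qed

lemma chord_slope_estimate:
  fixes f :: "real \<Rightarrow> real"
  assumes "\<bar>f a - f \<xi> - X * (a - \<xi>)\<bar> \<le> e * \<bar>a - \<xi>\<bar>" "\<bar>f b - f \<xi> - X * (b - \<xi>)\<bar> \<le> e * \<bar>b - \<xi>\<bar>"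
    and "max \<bar>a - \<xi>\<bar> \<bar>b - \<xi>\<bar> \<le> C * (b - a)" "0 \<le> e"
  shows "\<bar>f b - f a - X * (b - a)\<bar> \<le> 2 * e * C * (b - a)"
proof -
  have "f b - f a - X * (b - a) = (f b - f \<xi> - X * (b - \<xi>)) - (f a - f \<xi> - X * (a - \<xi>))"
    by (simp add: algebra_simps)
  then have "\<bar>f b - f a - X * (b - a)\<bar> \<le> e * \<bar>b - \<xi>\<bar> + e * \<bar>a - \<xi>\<bar>" using assms(1,2) by linarith
  also have "\<dots> \<le> e * (C * (b - a)) + e * (C * (b - a))"
    using assms(3,4) by (intro add_mono mult_left_mono) auto
  finally show ?thesis by (simp add: algebra_simps)
qed

locale C1_extension =
  fixes K :: "real set" and f D :: "real \<Rightarrow> real"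
  assumes compact: "compact K" and nonempty: "K \<noteq> {}" and continuous_D: "continuous_on K D"
    and remainder: "\<And>x. x \<in> K \<Longrightarrow> ((\<lambda>y. (f y - f x - D x * (y - x)) / \<bar>y - x\<bar>) \<longlongrightarrow> 0) (at x within K)"
    and sigma_finite: "\<And>\<xi>. \<xi> \<in> K \<Longrightarrow> sigma K \<xi> < \<infinity>"
begin

lemma closed: "closed K"
  using compact by (rule compact_imp_closed)

lemma Inf_K: "Inf K \<in> K" "k \<in> K \<Longrightarrow> Inf K \<le> k"
  using closed nonempty compact_imp_bounded[OF compact]
  by (auto intro: closed_contains_Inf cInf_lower bounded_imp_bdd_below)

lemma Sup_K: "Sup K \<in> K" "k \<in> K \<Longrightarrow> k \<le> Sup K"
  using closed nonempty compact_imp_bounded[OF compact]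
  by (auto intro: closed_contains_Sup cSup_upper bounded_imp_bdd_above)

lemma bounded_f_D: "\<exists>B>0. \<forall>k\<in>K. \<bar>f k\<bar> \<le> B \<and> \<bar>D k\<bar> \<le> B"
proof -
  have "continuous_on K f"
    using continuous_within_if_remainder_tendsto[OF remainder] by (auto simp: continuous_on_def)
  then have "bounded (f ` K)" "bounded (D ` K)"
    using compact continuous_D by (auto intro: compact_imp_bounded compact_continuous_image)
  then obtain B1 B2 where "B1 > 0" "\<forall>k\<in>K. \<bar>f k\<bar> \<le> B1" "B2 > 0" "\<forall>k\<in>K. \<bar>D k\<bar> \<le> B2"
    unfolding bounded_pos by auto
  then show ?thesis by (intro exI[of _ "B1 + B2"]) auto
qed

definition left_end :: "real \<Rightarrow> real" where "left_end t = Sup (K \<inter> {..t})"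
definition right_end :: "real \<Rightarrow> real" where "right_end t = Inf (K \<inter> {t..})"

lemma left_end: "Inf K \<le> t \<Longrightarrow> left_end t \<in> K \<and> left_end t \<le> t"
  and left_end_greatest: "k \<in> K \<Longrightarrow> k \<le> t \<Longrightarrow> k \<le> left_end t"
proof -
  have bdd: "bdd_above (K \<inter> {..t})" by (rule bdd_aboveI[of _ t]) auto
  show "Inf K \<le> t \<Longrightarrow> left_end t \<in> K \<and> left_end t \<le> t"
    using closed_contains_Sup[OF _ bdd] Inf_K(1) closed unfolding left_end_def by blast
  show "k \<in> K \<Longrightarrow> k \<le> t \<Longrightarrow> k \<le> left_end t"
    unfolding left_end_def using bdd by (intro cSup_upper) auto
qed

lemma right_end: "t \<le> Sup K \<Longrightarrow> right_end t \<in> K \<and> t \<le> right_end t"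
  and right_end_least: "k \<in> K \<Longrightarrow> t \<le> k \<Longrightarrow> right_end t \<le> k"
proof -
  have bdd: "bdd_below (K \<inter> {t..})" by (rule bdd_belowI[of _ t]) auto
  show "t \<le> Sup K \<Longrightarrow> right_end t \<in> K \<and> t \<le> right_end t"
    using closed_contains_Inf[OF _ bdd] Sup_K(1) closed unfolding right_end_def by blast
  show "k \<in> K \<Longrightarrow> t \<le> k \<Longrightarrow> right_end t \<le> k"
    unfolding right_end_def using bdd by (intro cInf_lower) auto
qed

lemma gap_around:
  assumes "t \<notin> K" "Inf K < t" "t < Sup K"
  shows "left_end t \<in> K" "right_end t \<in> K" "left_end t < t" "t < right_end t"
    and "{left_end t<..<right_end t} \<inter> K = {}"
proof -
  show l: "left_end t \<in> K" "left_end t < t" using left_end[of t] assms by (auto simp: order.order_iff_strict)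
  show r: "right_end t \<in> K" "t < right_end t" using right_end[of t] assms by (auto simp: order.order_iff_strict)
  show "{left_end t<..<right_end t} \<inter> K = {}"
    using left_end_greatest[of _ t] right_end_least[of _ t] by (force simp: not_le)
qed

lemma gap_ends:
  assumes "a \<in> K" "b \<in> K" "a < t" "t < b" "{a<..<b} \<inter> K = {}"
  shows "left_end t = a" "right_end t = b"
proof -
  have "left_end t \<in> K" "left_end t \<le> t"
    using left_end[of t] Inf_K(2)[OF assms(1)] assms(3) by auto
  moreover have "k \<le> a" if "k \<in> K" "k \<le> t" for k using that assms by (force simp: not_le)
  ultimately show "left_end t = a"
    using left_end_greatest[of a t] assms(1,3) by (meson order.antisym less_imp_le)
  have "right_end t \<in> K" "t \<le> right_end t"
    using right_end[of t] Sup_K(2)[OF assms(2)] assms(4) by auto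
  moreover have "b \<le> k" if "k \<in> K" "t \<le> k" for k
    using that assms by (meson disjoint_iff greaterThanLessThan_iff less_le_trans not_le)
  ultimately show "right_end t = b"
    using right_end_least[of b t] assms(2,4) by (meson order.antisym less_imp_le)
qed

definition extension :: "real \<Rightarrow> real" where
  "extension t = (if t \<in> K then f t
    else if t < Inf K then f (Inf K) + D (Inf K) * (t - Inf K)
    else if Sup K < t then f (Sup K) + D (Sup K) * (t - Sup K)
    else hermite f D (left_end t) (right_end t) t)"

definition extension' :: "real \<Rightarrow> real" where
  "extension' t = (if t \<in> K then D t
    else if t < Inf K then D (Inf K)
    else if Sup K < t then D (Sup K)
    else hermite_deriv f D (left_end t) (right_end t) t)"

lemma extension_in_K: "t \<in> K \<Longrightarrow> extension t = f t \<and> extension' t = D t"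
  by (simp add: extension_def extension'_def)

lemma extension_below: "t < Inf K \<Longrightarrow> extension t = f (Inf K) + D (Inf K) * (t - Inf K) \<and> extension' t = D (Inf K)"
  using Inf_K(2) by (force simp: extension_def extension'_def)

lemma extension_above: "Sup K < t \<Longrightarrow> extension t = f (Sup K) + D (Sup K) * (t - Sup K) \<and> extension' t = D (Sup K)"
  using Sup_K(2) Inf_K(1) by (force simp: extension_def extension'_def)

lemma extension_in_gap:
  assumes "a \<in> K" "b \<in> K" "a < b" "{a<..<b} \<inter> K = {}" "a \<le> t" "t \<le> b"
  shows "extension t = hermite f D a b t \<and> extension' t = hermite_deriv f D a b t"
proof -
  consider "t = a" | "t = b" | "a < t" "t < b" using assms(5,6) by linarith
  then show ?thesis
  proof cases
    case 3
    then have "t \<notin> K" "\<not> t < Inf K" "\<not> Sup K < t"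
      using assms Inf_K(2)[OF assms(1)] Sup_K(2)[OF assms(2)] by auto
    then show ?thesis using gap_ends[OF assms(1,2) 3 assms(4)] by (simp add: extension_def extension'_def)
  qed (use assms in \<open>auto simp: extension_in_K hermite_left hermite_right hermite_deriv_left hermite_deriv_right\<close>)
qed

lemma extension_piece:
  assumes "open U" "t \<in> U" "\<And>s. s \<in> U \<Longrightarrow> extension s = \<phi> s \<and> extension' s = \<phi>' s"
    and "(\<phi> has_real_derivative \<phi>' t) (at t)" "isCont \<phi>' t"
  shows "(extension has_real_derivative extension' t) (at t) \<and> isCont extension' t"
proof
  show "(extension has_real_derivative extension' t) (at t)"
    using has_field_derivative_transform_within_open[OF assms(4,1,2)] assms(2,3) by metis
  have "\<forall>\<^sub>F s in nhds t. extension' s = \<phi>' s" using assms(1-3) eventually_nhds by blast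
  then show "isCont extension' t" using isCont_cong assms(5) by blast
qed

lemma extension_deriv_off_K:
  assumes "t \<notin> K"
  shows "(extension has_real_derivative extension' t) (at t) \<and> isCont extension' t"
proof -
  have "t \<noteq> Inf K" "t \<noteq> Sup K" using assms Inf_K(1) Sup_K(1) by auto
  then consider "t < Inf K" | "Sup K < t" | "Inf K < t" "t < Sup K" by linarith
  then show ?thesis
  proof cases
    case 1
    then show ?thesis
      by (intro extension_piece[of "{..<Inf K}" _ "\<lambda>s. f (Inf K) + D (Inf K) * (s - Inf K)" "\<lambda>_. D (Inf K)"])
        (auto simp: extension_below intro!: derivative_eq_intros)
  next
    case 2
    then show ?thesis
      by (intro extension_piece[of "{Sup K<..}" _ "\<lambda>s. f (Sup K) + D (Sup K) * (s - Sup K)" "\<lambda>_. D (Sup K)"])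
        (auto simp: extension_above intro!: derivative_eq_intros)
  next
    case 3
    note gap = gap_around[OF assms 3]
    show ?thesis
    proof (rule extension_piece[of "{left_end t<..<right_end t}"])
      show "extension s = hermite f D (left_end t) (right_end t) s \<and>
          extension' s = hermite_deriv f D (left_end t) (right_end t) s" if "s \<in> {left_end t<..<right_end t}" for s
        using extension_in_gap[OF gap(1,2) _ gap(5)] gap(3,4) that by simp
    qed (use gap in \<open>auto intro: has_real_derivative_hermite isCont_hermite_deriv\<close>)
  qed
qed

lemma extension_mean_value_off_K:
  assumes "\<xi> \<in> K" "t \<notin> K"
  shows "\<exists>a c. a \<in> K \<and> \<bar>t - a\<bar> + \<bar>a - \<xi>\<bar> = \<bar>t - \<xi>\<bar> \<and> \<bar>c - \<xi>\<bar> \<le> \<bar>t - \<xi>\<bar>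
    \<and> extension t - extension a = extension' c * (t - a)"
proof -
  have "t \<noteq> Inf K" "t \<noteq> Sup K" using assms Inf_K(1) Sup_K(1) by auto
  then consider "t < Inf K" | "Sup K < t" | "Inf K < t" "t < Sup K" by linarith
  then show ?thesis
  proof cases
    case 1
    then show ?thesis using Inf_K(1) Inf_K(2)[OF assms(1)]
      by (intro exI[of _ "Inf K"] exI[of _ t]) (auto simp: extension_below extension_in_K)
  next
    case 2
    then show ?thesis using Sup_K(1) Sup_K(2)[OF assms(1)]
      by (intro exI[of _ "Sup K"] exI[of _ t]) (auto simp: extension_above extension_in_K)
  next
    case 3
    define l r where "l = left_end t" and "r = right_end t"
    have gap: "l \<in> K" "r \<in> K" "l < t" "t < r" "{l<..<r} \<inter> K = {}"
      using gap_around[OF assms(2) 3] by (simp_all add: l_def r_def)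
    have on_gap: "extension s = hermite f D l r s \<and> extension' s = hermite_deriv f D l r s"
      if "l \<le> s" "s \<le> r" for s
      using extension_in_gap[OF gap(1,2) _ gap(5) that] gap(3,4) by simp
    have "\<xi> \<le> l \<or> r \<le> \<xi>" using gap(5) assms(1) by (force simp: not_le)
    then obtain a where "a \<in> {l, r}" and a: "\<bar>t - a\<bar> + \<bar>a - \<xi>\<bar> = \<bar>t - \<xi>\<bar>"
      using gap(3,4) by (elim disjE) (force intro: exI[of _ l], force intro: exI[of _ r])
    obtain c where c: "min a t \<le> c" "c \<le> max a t" "hermite f D l r t - hermite f D l r a = hermite_deriv f D l r c * (t - a)"
      using mean_value_between[of "hermite f D l r" "hermite_deriv f D l r" a t]
        has_real_derivative_hermite[of l r] gap(3,4) by force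
    have "extension t - extension a = extension' c * (t - a)"
      using c \<open>a \<in> {l, r}\<close> gap(3,4) on_gap[of t] on_gap[of a] on_gap[of c] by auto
    moreover have "\<bar>c - \<xi>\<bar> \<le> \<bar>t - \<xi>\<bar>" using a c by (auto simp: abs_if split: if_splits)
    ultimately show ?thesis using \<open>a \<in> {l, r}\<close> gap(1,2) a by blast
  qed
qed

lemma hermite_deriv_close_on_gaps_near_xi:
  assumes "\<xi> \<in> K" "\<epsilon> > 0"
  obtains \<eta> where "\<eta> > 0"
    "\<And>a b c. a \<in> K \<Longrightarrow> b \<in> K \<Longrightarrow> a < b \<Longrightarrow> {a<..<b} \<inter> K = {} \<Longrightarrow> a \<le> c \<Longrightarrow> c \<le> b \<Longrightarrow>
      \<bar>a - \<xi>\<bar> < \<eta> \<Longrightarrow> \<bar>b - \<xi>\<bar> < \<eta> \<Longrightarrow> \<bar>hermite_deriv f D a b c - D \<xi>\<bar> \<le> \<epsilon>"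
proof -
  define e where "e = \<epsilon> / 6"
  have "e > 0" using assms(2) by (simp add: e_def)
  obtain e0 C where "e0 > 0" and ratio: "\<And>a b. gap K {a<..<b} \<Longrightarrow> \<xi> - e0 \<le> a \<Longrightarrow> b \<le> \<xi> + e0 \<Longrightarrow>
      max \<bar>a - \<xi>\<bar> \<bar>b - \<xi>\<bar> \<le> C * (b - a)"
    using sigma_finite[OF assms(1)] sigma_finite_iff[OF closed assms(1)] by blast
  define C' where "C' = max C 1"
  have "C' > 0" by (simp add: C'_def)
  obtain d1 where "d1 > 0" and d1: "\<And>k. k \<in> K \<Longrightarrow> \<bar>k - \<xi>\<bar> < d1 \<Longrightarrow> \<bar>D k - D \<xi>\<bar> < e"
    using continuous_D assms(1) \<open>e > 0\<close> unfolding continuous_on_iff dist_real_def by blast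
  obtain d2 where "d2 > 0" and d2: "\<And>y. y \<in> K \<Longrightarrow> \<bar>y - \<xi>\<bar> < d2 \<Longrightarrow>
      \<bar>f y - f \<xi> - D \<xi> * (y - \<xi>)\<bar> \<le> e / C' * \<bar>y - \<xi>\<bar>"
    using remainder_le_eventually[OF remainder[OF assms(1)], of "e / C'"] \<open>e > 0\<close> \<open>C' > 0\<close> by auto
  show thesis
  proof (rule that[of "min (min d1 d2) e0"])
    fix a b c assume "a \<in> K" "b \<in> K" "a < b" "{a<..<b} \<inter> K = {}" "a \<le> c" "c \<le> b"
      and near: "\<bar>a - \<xi>\<bar> < min (min d1 d2) e0" "\<bar>b - \<xi>\<bar> < min (min d1 d2) e0"
    have "max \<bar>a - \<xi>\<bar> \<bar>b - \<xi>\<bar> \<le> C * (b - a)"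
      using ratio near \<open>a \<in> K\<close> \<open>b \<in> K\<close> \<open>a < b\<close> \<open>{a<..<b} \<inter> K = {}\<close> by (auto simp: gap_Ioo_iff[OF closed])
    also have "\<dots> \<le> C' * (b - a)" using \<open>a < b\<close> by (simp add: C'_def mult_right_mono)
    finally have "\<bar>f b - f a - D \<xi> * (b - a)\<bar> \<le> 2 * (e / C') * C' * (b - a)"
      using d2 \<open>a \<in> K\<close> \<open>b \<in> K\<close> near \<open>e > 0\<close> \<open>C' > 0\<close> by (intro chord_slope_estimate) auto
    then have "\<bar>(f b - f a) / (b - a) - D \<xi>\<bar> \<le> 2 * e"
      using \<open>a < b\<close> \<open>C' > 0\<close> by (simp add: abs_le_iff field_simps)
    moreover have "\<bar>D a - D \<xi>\<bar> \<le> e" "\<bar>D b - D \<xi>\<bar> \<le> e"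
      using d1 \<open>a \<in> K\<close> \<open>b \<in> K\<close> near by (auto intro: less_imp_le)
    ultimately have "\<bar>hermite_deriv f D a b c - D \<xi>\<bar> \<le> 6 * e"
      using hermite_deriv_close[OF \<open>a < b\<close> \<open>a \<le> c\<close> \<open>c \<le> b\<close>] by blast
    then show "\<bar>hermite_deriv f D a b c - D \<xi>\<bar> \<le> \<epsilon>" by (simp add: e_def)
  qed (use \<open>d1 > 0\<close> \<open>d2 > 0\<close> \<open>e0 > 0\<close> in simp)
qed

text \<open>On a gap of length at least \<eta>/2 the excess slope is bounded, so near its endpoint
  the Hermite derivative is close to the value of D there.\<close>
lemma hermite_deriv_close_on_gaps_reaching_far:
  assumes "\<xi> \<in> K" "\<epsilon> > 0" "\<eta> > 0"
  obtains \<delta> where "\<delta> > 0"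
    "\<And>a b c. a \<in> K \<Longrightarrow> b \<in> K \<Longrightarrow> a < b \<Longrightarrow> {a<..<b} \<inter> K = {} \<Longrightarrow> a \<le> c \<Longrightarrow> c \<le> b \<Longrightarrow>
      \<bar>c - \<xi>\<bar> < \<delta> \<Longrightarrow> \<eta> \<le> max \<bar>a - \<xi>\<bar> \<bar>b - \<xi>\<bar> \<Longrightarrow> \<bar>hermite_deriv f D a b c - D \<xi>\<bar> \<le> \<epsilon>"
proof -
  obtain B where "B > 0" and B: "\<And>k. k \<in> K \<Longrightarrow> \<bar>f k\<bar> \<le> B \<and> \<bar>D k\<bar> \<le> B" using bounded_f_D by blast
  obtain d where "d > 0" and d: "\<And>k. k \<in> K \<Longrightarrow> \<bar>k - \<xi>\<bar> < d \<Longrightarrow> \<bar>D k - D \<xi>\<bar> < \<epsilon> / 2"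
    using continuous_D assms(1,2) unfolding continuous_on_iff dist_real_def by (meson half_gt_zero)
  define W where "W = 2 * B + 6 * (4 * B / \<eta> + B)"
  have "W > 0" using \<open>B > 0\<close> \<open>\<eta> > 0\<close> by (simp add: W_def add_pos_nonneg)
  define \<delta> where "\<delta> = min (min (\<eta> / 2) d) (\<epsilon> * \<eta> / (4 * W))"
  have "\<delta> > 0" using \<open>d > 0\<close> \<open>W > 0\<close> assms(2,3) by (simp add: \<delta>_def)
  have "\<delta> \<le> \<eta> / 2" "\<delta> \<le> d" "\<delta> \<le> \<epsilon> * \<eta> / (4 * W)" by (auto simp: \<delta>_def)
  show thesis
  proof (rule that[OF \<open>\<delta> > 0\<close>])
    fix a b c assume "a \<in> K" "b \<in> K" "a < b" "{a<..<b} \<inter> K = {}" "a \<le> c" "c \<le> b"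
      and "\<bar>c - \<xi>\<bar> < \<delta>" "\<eta> \<le> max \<bar>a - \<xi>\<bar> \<bar>b - \<xi>\<bar>"
    have side: "\<xi> \<le> a \<or> b \<le> \<xi>" using \<open>{a<..<b} \<inter> K = {}\<close> assms(1) by (force simp: not_le)
    have long: "\<eta> / 2 \<le> b - a"
      using far_gap_length_ge[OF side] \<open>a \<le> c\<close> \<open>c \<le> b\<close> \<open>\<bar>c - \<xi>\<bar> < \<delta>\<close> \<open>\<delta> \<le> \<eta> / 2\<close>
        \<open>\<eta> \<le> max \<bar>a - \<xi>\<bar> \<bar>b - \<xi>\<bar>\<close> by blast
    have "2 * B / (b - a) \<le> 2 * B / (\<eta> / 2)"
      using long \<open>B > 0\<close> \<open>\<eta> > 0\<close> by (intro divide_left_mono) auto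
    moreover have "\<bar>hermite_excess f D a b\<bar> \<le> 2 * B / (b - a) + B"
      using hermite_excess_bound[OF \<open>a < b\<close>] B[OF \<open>a \<in> K\<close>] B[OF \<open>b \<in> K\<close>] by blast
    ultimately have excess: "\<bar>hermite_excess f D a b\<bar> \<le> 4 * B / \<eta> + B" by simp
    have small: "x / (b - a) * W \<le> \<epsilon> / 2" if "0 \<le> x" "x < \<delta>" for x
    proof -
      have "x / (b - a) \<le> \<delta> / (\<eta> / 2)"
        using that long \<open>\<eta> > 0\<close> by (intro frac_le) auto
      then have "x / (b - a) * W \<le> \<delta> / (\<eta> / 2) * W"
        by (rule mult_right_mono) (use \<open>W > 0\<close> in simp)
      also have "\<dots> \<le> \<epsilon> / 2"
        using \<open>\<delta> \<le> \<epsilon> * \<eta> / (4 * W)\<close> \<open>W > 0\<close> \<open>\<eta> > 0\<close> by (simp add: field_simps)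
      finally show ?thesis .
    qed
    have "\<bar>D a - D \<xi>\<bar> \<le> 2 * B" "\<bar>D b - D \<xi>\<bar> \<le> 2 * B"
      using B[OF \<open>a \<in> K\<close>] B[OF \<open>b \<in> K\<close>] B[OF assms(1)] by auto
    from side show "\<bar>hermite_deriv f D a b c - D \<xi>\<bar> \<le> \<epsilon>"
    proof
      assume "\<xi> \<le> a"
      then have "\<bar>D a - D \<xi>\<bar> \<le> \<epsilon> / 2" "c - a < \<delta>"
        using d[OF \<open>a \<in> K\<close>] \<open>a \<le> c\<close> \<open>\<bar>c - \<xi>\<bar> < \<delta>\<close> \<open>\<delta> \<le> d\<close> by auto
      then have "\<bar>hermite_deriv f D a b c - D \<xi>\<bar> \<le> \<epsilon> / 2 + (c - a) / (b - a) * W"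
        using hermite_deriv_near_left_end[OF \<open>a < b\<close> \<open>a \<le> c\<close> \<open>c \<le> b\<close> _ \<open>\<bar>D b - D \<xi>\<bar> \<le> 2 * B\<close> excess]
        unfolding W_def by blast
      then show ?thesis using small[of "c - a"] \<open>a \<le> c\<close> \<open>c - a < \<delta>\<close> by linarith
    next
      assume "b \<le> \<xi>"
      then have "\<bar>D b - D \<xi>\<bar> \<le> \<epsilon> / 2" "b - c < \<delta>"
        using d[OF \<open>b \<in> K\<close>] \<open>c \<le> b\<close> \<open>\<bar>c - \<xi>\<bar> < \<delta>\<close> \<open>\<delta> \<le> d\<close> by auto
      then have "\<bar>hermite_deriv f D a b c - D \<xi>\<bar> \<le> \<epsilon> / 2 + (b - c) / (b - a) * W"
        using hermite_deriv_near_right_end[OF \<open>a < b\<close> \<open>a \<le> c\<close> \<open>c \<le> b\<close> _ \<open>\<bar>D a - D \<xi>\<bar> \<le> 2 * B\<close> excess]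
        unfolding W_def by blast
      then show ?thesis using small[of "b - c"] \<open>c \<le> b\<close> \<open>b - c < \<delta>\<close> by linarith
    qed
  qed
qed

lemma isCont_extension'_K:
  assumes "\<xi> \<in> K"
  shows "isCont extension' \<xi>"
  unfolding continuous_at_eps_delta dist_real_def
proof (intro allI impI)
  fix \<epsilon> :: real assume "\<epsilon> > 0"
  obtain \<eta> where "\<eta> > 0" and near_xi: "\<And>a b c. a \<in> K \<Longrightarrow> b \<in> K \<Longrightarrow> a < b \<Longrightarrow> {a<..<b} \<inter> K = {} \<Longrightarrow>
      a \<le> c \<Longrightarrow> c \<le> b \<Longrightarrow> \<bar>a - \<xi>\<bar> < \<eta> \<Longrightarrow> \<bar>b - \<xi>\<bar> < \<eta> \<Longrightarrow> \<bar>hermite_deriv f D a b c - D \<xi>\<bar> \<le> \<epsilon> / 2"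
    using hermite_deriv_close_on_gaps_near_xi[OF assms, of "\<epsilon> / 2"] \<open>\<epsilon> > 0\<close> by auto
  obtain \<delta> where "\<delta> > 0" and reaching_far: "\<And>a b c. a \<in> K \<Longrightarrow> b \<in> K \<Longrightarrow> a < b \<Longrightarrow> {a<..<b} \<inter> K = {} \<Longrightarrow>
      a \<le> c \<Longrightarrow> c \<le> b \<Longrightarrow> \<bar>c - \<xi>\<bar> < \<delta> \<Longrightarrow> \<eta> \<le> max \<bar>a - \<xi>\<bar> \<bar>b - \<xi>\<bar> \<Longrightarrow>
      \<bar>hermite_deriv f D a b c - D \<xi>\<bar> \<le> \<epsilon> / 2"
    using hermite_deriv_close_on_gaps_reaching_far[OF assms _ \<open>\<eta> > 0\<close>, of "\<epsilon> / 2"] \<open>\<epsilon> > 0\<close> by auto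
  obtain d where "d > 0" and d: "\<And>k. k \<in> K \<Longrightarrow> \<bar>k - \<xi>\<bar> < d \<Longrightarrow> \<bar>D k - D \<xi>\<bar> < \<epsilon>"
    using continuous_D assms \<open>\<epsilon> > 0\<close> unfolding continuous_on_iff dist_real_def by blast
  have "\<bar>extension' c - extension' \<xi>\<bar> < \<epsilon>" if c: "\<bar>c - \<xi>\<bar> < min \<delta> d" for c
  proof -
    have "Inf K \<le> \<xi>" "\<xi> \<le> Sup K" using Inf_K(2) Sup_K(2) assms by auto
    consider "c \<in> K" | "c < Inf K" | "Sup K < c" | "c \<notin> K" "Inf K < c" "c < Sup K"
      using Inf_K(1) Sup_K(1) by (cases "c \<in> K") force+
    then show ?thesis
    proof cases
      case 4
      note gap = gap_around[OF 4]
      then have "\<bar>hermite_deriv f D (left_end c) (right_end c) c - D \<xi>\<bar> \<le> \<epsilon> / 2"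
        using near_xi[of "left_end c" "right_end c" c] reaching_far[of "left_end c" "right_end c" c] c
        by (cases "\<bar>left_end c - \<xi>\<bar> < \<eta> \<and> \<bar>right_end c - \<xi>\<bar> < \<eta>") auto
      then show ?thesis
        using extension_in_gap[OF gap(1,2) _ gap(5), of c] gap(3,4) \<open>\<epsilon> > 0\<close> assms
        by (simp add: extension_in_K)
    qed (use assms c d Inf_K(1) Sup_K(1) \<open>Inf K \<le> \<xi>\<close> \<open>\<xi> \<le> Sup K\<close> in
        \<open>auto simp: extension_in_K extension_below extension_above\<close>)
  qed
  then show "\<exists>d>0. \<forall>c. \<bar>c - \<xi>\<bar> < d \<longrightarrow> \<bar>extension' c - extension' \<xi>\<bar> < \<epsilon>"
    using \<open>\<delta> > 0\<close> \<open>d > 0\<close> by (intro exI[of _ "min \<delta> d"]) auto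
qed

lemma extension_has_real_derivative: "(extension has_real_derivative extension' x) (at x)"
  and isCont_extension': "isCont extension' x"
proof -
  show cont: "isCont extension' x" for x
    using isCont_extension'_K extension_deriv_off_K by (cases "x \<in> K") auto
  show "(extension has_real_derivative extension' x) (at x)"
  proof (cases "x \<in> K")
    case True
    show ?thesis
    proof (rule has_real_derivative_from_set_and_mean_values[OF cont])
      show "\<exists>\<delta>>0. \<forall>y\<in>K. \<bar>y - x\<bar> < \<delta> \<longrightarrow> \<bar>extension y - extension x - extension' x * (y - x)\<bar> \<le> e * \<bar>y - x\<bar>"
        if "e > 0" for e
        using remainder_le_eventually[OF remainder[OF True] that] True by (simp add: extension_in_K)
    qed (use extension_mean_value_off_K[OF True] in blast)
  qed (use extension_deriv_off_K in blast)
qed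

lemma extension_C1_real: "extension \<in> C1_real"
  unfolding C1_real_def using extension_has_real_derivative isCont_extension'
  by (auto intro!: continuous_at_imp_continuous_on)

end

lemma C1_restr_subset_C1_on: "C1_restr K \<subseteq> C1_on K"
proof
  fix f assume "f \<in> C1_restr K"
  then obtain g g' where g: "\<And>x. (g has_real_derivative g' x) (at x)" "continuous_on UNIV g'"
    and fg: "\<And>x. x \<in> K \<Longrightarrow> f x = g x"
    unfolding C1_restr_def C1_real_def by blast
  show "f \<in> C1_on K" unfolding C1_on_def
  proof (intro CollectI exI[of _ g'] conjI ballI)
    show "continuous_on K g'" using g(2) by (rule continuous_on_subset) simp
    fix x assume "x \<in> K"
    have "(g has_derivative (\<lambda>h. g' x * h)) (at x within K)"
      using g(1)[of x] unfolding has_field_derivative_def by (rule has_derivative_at_withinI)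
    then have "((\<lambda>y. (g y - g x - g' x * (y - x)) / \<bar>y - x\<bar>) \<longlongrightarrow> 0) (at x within K)"
      unfolding has_derivative_within by (simp add: algebra_simps divide_inverse)
    then show "((\<lambda>y. (f y - f x - g' x * (y - x)) / \<bar>y - x\<bar>) \<longlongrightarrow> 0) (at x within K)"
      by (rule Lim_transform_within[OF _ zero_less_one]) (simp add: fg \<open>x \<in> K\<close>)
  qed
qed

lemma C1_on_subset_C1_restr:
  fixes K :: "real set"
  assumes "compact K" "\<forall>\<xi>\<in>K. sigma K \<xi> < \<infinity>"
  shows "C1_on K \<subseteq> C1_restr K"
proof
  fix f assume "f \<in> C1_on K"
  then obtain D where D: "continuous_on K D"
    "\<And>x. x \<in> K \<Longrightarrow> ((\<lambda>y. (f y - f x - D x * (y - x)) / \<bar>y - x\<bar>) \<longlongrightarrow> 0) (at x within K)"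
    unfolding C1_on_def by blast
  show "f \<in> C1_restr K"
  proof (cases "K = {}")
    case True
    have "(\<lambda>_. 0) \<in> C1_real" unfolding C1_real_def
      by (intro CollectI exI[of _ "\<lambda>_. 0"] conjI allI) (auto intro: derivative_eq_intros)
    then show ?thesis using True by (auto simp: C1_restr_def)
  next
    case False
    interpret C1_extension K f D using assms False D by unfold_locales auto
    have "\<forall>x\<in>K. f x = extension x" using extension_in_K by simp
    then show ?thesis unfolding C1_restr_def using extension_C1_real by blast
  qed
qed

theorem mainTheorem17:
  fixes K :: "real set"
  assumes "compact K"
  shows "C1_on K = C1_restr K \<longleftrightarrow> (\<forall>\<xi>\<in>K. sigma K \<xi> < \<infinity>)"
  using C1_on_ne_C1_restr_if_sigma_infinite[OF compact_imp_closed[OF assms]]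
    C1_on_subset_C1_restr[OF assms] C1_restr_subset_C1_on by blast

end
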